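(* Let $p\in(0,1]$. Let $Q=(q_{j,k})_{j,k\geq 0}$ be the generator on $\mathbb N_0$ with $q_{j,j+1}=jp$, $q_{j,k}=\binom{j}{k}p^k(1-p)^{j-k}$ for $0\leq k\leq j-1$, $q_{j,j}=-(jp+1-p^j)$, and $q_{j,k}=0$ otherwise. Let $\bar Q=(\bar q_{j,k})_{j,k\geq1}$ be the generator on $\mathbb N=\{1,2,\dots\}$ with $\bar q_{j,k}=\binom{j-1}{k-1}p^k(1-p)^{j-k}$ for $1\leq k\leq j-1$, $\bar q_{j,j+1}=(j+1)p$, $\bar q_{j,j}=p^j-(2+j)p$, and $\bar q_{j,k}=0$ otherwise. If $\bar Q$ defines a positive recurrent Markov chain, then there exists a quasi-stationary distribution $a$ for $Q$ with eigenvalue $-(1-2p)$, i.e. $a=(a_k)_{k\geq1}$ with $a_k\geq0$, $\sum_k a_k=1$ and $\sum_{j\geq1}a_jq_{j,k}=-(1-2p)a_k$ for all $k\geq1$.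
   Context: $\bar Q$ is the $(1-2p)$-dual of $Q$ with respect to the vector $x_k=k$, i.e. $\bar q_{j,k}=(q_{j,k}+(1-2p)\delta_{jk})k/j$ for $j,k\geq1$. *)

theory Defs
  imports "HOL-Analysis.Analysis"
begin

definition Qgen :: "real \<Rightarrow> nat \<Rightarrow> nat \<Rightarrow> real" where
  "Qgen p j k =
     (if k = j + 1 then real j * p
      else if k < j then real (j choose k) * p ^ k * (1 - p) ^ (j - k)
      else if k = j then - (real j * p + 1 - p ^ j)
      else 0)"

text \<open>The dual generator Qbar on the positive integers (only entries with j, k >= 1 matter).\<close>
definition Qbar :: "real \<Rightarrow> nat \<Rightarrow> nat \<Rightarrow> real" where
  "Qbar p j k =
     (if 1 \<le> k \<and> k < j then real ((j - 1) choose (k - 1)) * p ^ k * (1 - p) ^ (j - k)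
      else if k = j + 1 then real (j + 1) * p
      else if k = j then p ^ j - (2 + real j) * p
      else 0)"

text \<open>Jump matrix of the embedded (jump) chain, with q_i = - Q i i (Norris' convention).\<close>
definition jump_matrix :: "(nat \<Rightarrow> nat \<Rightarrow> real) \<Rightarrow> nat \<Rightarrow> nat \<Rightarrow> real" where
  "jump_matrix Q i j =
     (if - Q i i > 0 then (if j \<noteq> i then Q i j / (- Q i i) else 0)
      else (if j = i then 1 else 0))"

text \<open>taboo S Q i n j: probability that the jump chain started at i is at j at step n
  without having visited i at any of the steps 1, ..., n-1.\<close>
fun taboo :: "nat set \<Rightarrow> (nat \<Rightarrow> nat \<Rightarrow> real) \<Rightarrow> nat \<Rightarrow> nat \<Rightarrow> nat \<Rightarrow> ennreal" where
  "taboo S Q i 0 j = (if j = i then 1 else 0)"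
| "taboo S Q i (Suc n) j =
     (\<Sum>k. if k \<in> S \<and> (k \<noteq> i \<or> n = 0) then taboo S Q i n k * ennreal (jump_matrix Q k j) else 0)"

definition ctmc_irreducible :: "nat set \<Rightarrow> (nat \<Rightarrow> nat \<Rightarrow> real) \<Rightarrow> bool" where
  "ctmc_irreducible S Q \<longleftrightarrow>
     (\<forall>i\<in>S. \<forall>j\<in>S. (i, j) \<in> {(a, b). a \<in> S \<and> b \<in> S \<and> a \<noteq> b \<and> Q a b > 0}\<^sup>*)"

text \<open>Expected return time m_i = E_i[T_i], T_i = inf{t >= J_1 : X_t = i}:
  holding time at i plus expected holding times at the states j visited before returning.\<close>
definition mean_return_time :: "nat set \<Rightarrow> (nat \<Rightarrow> nat \<Rightarrow> real) \<Rightarrow> nat \<Rightarrow> ennreal" where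
  "mean_return_time S Q i =
     ennreal (1 / (- Q i i)) +
     (\<Sum>n. \<Sum>j. if j \<in> S \<and> j \<noteq> i then taboo S Q i (Suc n) j * ennreal (1 / (- Q j j)) else 0)"

definition pos_recurrent_state :: "nat set \<Rightarrow> (nat \<Rightarrow> nat \<Rightarrow> real) \<Rightarrow> nat \<Rightarrow> bool" where
  "pos_recurrent_state S Q i \<longleftrightarrow>
     - Q i i > 0 \<and> (\<Sum>n. taboo S Q i (Suc n) i) = 1 \<and> mean_return_time S Q i < \<infinity>"

definition pos_recurrent_chain :: "nat set \<Rightarrow> (nat \<Rightarrow> nat \<Rightarrow> real) \<Rightarrow> bool" where
  "pos_recurrent_chain S Q \<longleftrightarrow> ctmc_irreducible S Q \<and> (\<forall>i\<in>S. pos_recurrent_state S Q i)"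

definition qsd :: "(nat \<Rightarrow> nat \<Rightarrow> real) \<Rightarrow> real \<Rightarrow> (nat \<Rightarrow> real) \<Rightarrow> bool" where
  "qsd Q lam a \<longleftrightarrow>
     (\<forall>k\<ge>1. a k \<ge> 0) \<and> (a has_sum 1) {1..} \<and>
     (\<forall>k\<ge>1. ((\<lambda>j. a j * Q j k) has_sum (lam * a k)) {1..})"

end

theory Submission
  imports Defs
begin

(* The chain Qbar is the (1 - 2p)-dual of Q with respect to x_k = k, i.e.
   k q_jk = j qbar_jk - (1 - 2p) delta_jk k.  Hence every invariant measure mu of Qbar
   (mu Qbar = 0) yields a measure a_j = mu_j / j with a Q = -(1 - 2p) a.
   Positive recurrence of Qbar supplies a finite invariant measure: the expected time spent in
   each state during an excursion from state 1, whose total mass is the mean return time.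
   Since mu_j / j <= mu_j, the measure a is finite as well and can be normalised. *)

lemma suminf_ennreal_commute:
  fixes f :: "nat \<Rightarrow> nat \<Rightarrow> ennreal"
  shows "(\<Sum>i. \<Sum>j. f i j) = (\<Sum>j. \<Sum>i. f i j)"
proof -
  have "(\<Sum>i. \<Sum>j. f i j) = (\<Sum>i. \<integral>\<^sup>+j. f i j \<partial>count_space UNIV)"
    by (simp add: nn_integral_count_space_nat)
  also have "\<dots> = \<integral>\<^sup>+j. (\<Sum>i. f i j) \<partial>count_space UNIV"
    by (rule nn_integral_suminf[symmetric]) simp
  also have "\<dots> = (\<Sum>j. \<Sum>i. f i j)"
    by (simp add: nn_integral_count_space_nat)
  finally show ?thesis .
qed

lemma has_sum_of_suminf_ennreal:
  fixes f :: "nat \<Rightarrow> real"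
  assumes "\<And>n. 0 \<le> f n" and "0 \<le> x" and "(\<Sum>n. ennreal (f n)) = ennreal x"
  shows "(f has_sum x) UNIV"
proof -
  have "(\<lambda>n. ennreal (f n)) sums ennreal x"
    using assms(3) summable_sums[OF summableI] by metis
  then show ?thesis
    using assms(1,2) by (intro sums_nonneg_imp_has_sum) simp_all
qed

definition invariant_measure :: "nat set \<Rightarrow> (nat \<Rightarrow> nat \<Rightarrow> real) \<Rightarrow> (nat \<Rightarrow> real) \<Rightarrow> bool" where
  "invariant_measure S Q \<mu> \<longleftrightarrow>
     (\<forall>j\<in>S. 0 \<le> \<mu> j) \<and> (\<forall>k\<in>S. ((\<lambda>j. \<mu> j * Q j k) has_sum 0) S)"

text \<open>Expected number of visits of the jump chain to k during an excursion from i,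
  the visit to i at time 0 included.\<close>
definition excursion_visits :: "nat set \<Rightarrow> (nat \<Rightarrow> nat \<Rightarrow> real) \<Rightarrow> nat \<Rightarrow> nat \<Rightarrow> ennreal" where
  "excursion_visits S Q i k = (if k = i then 1 else \<Sum>n. taboo S Q i (Suc n) k)"

lemma excursion_visits_invariant:
  assumes return: "(\<Sum>n. taboo S Q i (Suc n) i) = 1"
  shows "excursion_visits S Q i k =
           (\<Sum>m. if m \<in> S then excursion_visits S Q i m * ennreal (jump_matrix Q m k) else 0)"
proof -
  let ?t = "taboo S Q i" and ?E = "\<lambda>m. ennreal (jump_matrix Q m k)"
  have split_by_state:
    "(\<Sum>n. if m \<in> S \<and> (m \<noteq> i \<or> n = 0) then ?t n m * ?E m else 0)
       = (if m \<in> S then excursion_visits S Q i m * ?E m else 0)" for m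
  proof (cases "m \<in> S \<and> m \<noteq> i")
    case True
    have "(\<Sum>n. ?t n m) = (\<Sum>n. ?t (Suc n) m) + ?t 0 m"
      using suminf_offset[of "\<lambda>n. ?t n m" 1] by (simp add: summableI)
    then show ?thesis
      using True by (simp add: excursion_visits_def)
  next
    case False
    have "(\<Sum>n. if m \<in> S \<and> (m \<noteq> i \<or> n = 0) then ?t n m * ?E m else 0)
            = (if m \<in> S then ?t 0 m * ?E m else 0)"
      using False by (subst suminf_finite[of "{0}"]) auto
    then show ?thesis
      using False by (auto simp: excursion_visits_def)
  qed
  have "(\<Sum>n. ?t (Suc n) k)
          = (\<Sum>n. \<Sum>m. if m \<in> S \<and> (m \<noteq> i \<or> n = 0) then ?t n m * ?E m else 0)"
    by simp
  also have "\<dots> = (\<Sum>m. \<Sum>n. if m \<in> S \<and> (m \<noteq> i \<or> n = 0) then ?t n m * ?E m else 0)"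
    by (rule suminf_ennreal_commute)
  also have "\<dots> = (\<Sum>m. if m \<in> S then excursion_visits S Q i m * ?E m else 0)"
    by (simp only: split_by_state)
  finally show ?thesis
    using return by (cases "k = i") (simp_all add: excursion_visits_def del: taboo.simps)
qed

lemma mean_return_time_excursion_visits:
  assumes "i \<in> S"
  shows "mean_return_time S Q i =
           (\<Sum>j. if j \<in> S then excursion_visits S Q i j * ennreal (1 / - Q j j) else 0)"
proof -
  let ?h = "\<lambda>j. ennreal (1 / - Q j j)"
  let ?w = "\<lambda>j. if j \<in> S \<and> j \<noteq> i then excursion_visits S Q i j * ?h j else 0"
  have "mean_return_time S Q i
          = ?h i + (\<Sum>j. \<Sum>n. if j \<in> S \<and> j \<noteq> i then taboo S Q i (Suc n) j * ?h j else 0)"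
    unfolding mean_return_time_def by (subst suminf_ennreal_commute) (rule refl)
  also have "\<dots> = ?h i + (\<Sum>j. ?w j)"
    by (intro arg_cong2[where f = "(+)"] suminf_cong) (auto simp: excursion_visits_def)
  also have "?h i = (\<Sum>j. if j = i then ?h i else 0)"
    by (subst suminf_finite[of "{i}"]) auto
  also have "\<dots> + (\<Sum>j. ?w j) = (\<Sum>j. (if j = i then ?h i else 0) + ?w j)"
    by (rule suminf_add) (simp_all add: summableI)
  also have "\<dots> = (\<Sum>j. if j \<in> S then excursion_visits S Q i j * ?h j else 0)"
    using assms by (intro suminf_cong) (simp add: excursion_visits_def)
  finally show ?thesis .
qed

lemma invariant_measure_of_jump_invariant:
  assumes rates: "\<And>j. j \<in> S \<Longrightarrow> 0 < - Q j j"
    and offdiag: "\<And>j k. j \<in> S \<Longrightarrow> k \<in> S \<Longrightarrow> j \<noteq> k \<Longrightarrow> 0 \<le> Q j k"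
    and nonneg: "\<And>j. j \<in> S \<Longrightarrow> 0 \<le> \<mu> j"
    and jump_inv: "\<And>k. k \<in> S \<Longrightarrow> ennreal (\<mu> k * - Q k k) =
      (\<Sum>m. if m \<in> S then ennreal (\<mu> m * - Q m m) * ennreal (jump_matrix Q m k) else 0)"
  shows "invariant_measure S Q \<mu>"
  unfolding invariant_measure_def
proof (intro conjI ballI nonneg)
  fix k assume k: "k \<in> S"
  define g where "g m = (if m \<in> S \<and> m \<noteq> k then \<mu> m * Q m k else 0)" for m
  have g_nonneg: "0 \<le> g m" for m
    using nonneg offdiag k by (simp add: g_def)
  have "(if m \<in> S then ennreal (\<mu> m * - Q m m) * ennreal (jump_matrix Q m k) else 0)
          = ennreal (g m)" for m
  proof (cases "m \<in> S \<and> m \<noteq> k")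
    case True
    let ?q = "- Q m m"
    have q_pos: "0 < ?q"
      using True rates by simp
    have "jump_matrix Q m k = Q m k / ?q"
      using True q_pos unfolding jump_matrix_def by simp
    moreover have "0 \<le> \<mu> m * ?q" "0 \<le> Q m k / ?q"
      using True k nonneg[of m] offdiag[of m k] q_pos
      by (auto simp: mult_nonneg_nonpos divide_nonneg_neg)
    ultimately have "ennreal (\<mu> m * ?q) * ennreal (jump_matrix Q m k)
        = ennreal (\<mu> m * ?q * (Q m k / ?q))"
      by (simp only: ennreal_mult)
    also have "\<mu> m * ?q * (Q m k / ?q) = \<mu> m * Q m k"
      using True rates[of m] by simp
    finally show ?thesis
      using True by (simp add: g_def)
  qed (use rates in \<open>auto simp: g_def jump_matrix_def\<close>)
  then have "(\<Sum>m. ennreal (g m)) = ennreal (\<mu> k * - Q k k)"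
    using jump_inv[OF k] by simp
  then have "(g has_sum (\<mu> k * - Q k k)) UNIV"
    using g_nonneg nonneg[OF k] rates[OF k]
    by (intro has_sum_of_suminf_ennreal) (simp_all add: mult_nonneg_nonpos)
  then have off: "(g has_sum (\<mu> k * - Q k k)) S"
    by (rule has_sum_cong_neutral[THEN iffD1, rotated -1]) (auto simp: g_def)
  have diag: "((\<lambda>j. if j = k then \<mu> k * Q k k else 0) has_sum (\<mu> k * Q k k)) S"
    by (rule has_sum_finite_neutralI[of "{k}"]) (use k in auto)
  have "((\<lambda>j. g j + (if j = k then \<mu> k * Q k k else 0)) has_sum 0) S"
    using has_sum_add[OF off diag] by simp
  then show "((\<lambda>j. \<mu> j * Q j k) has_sum 0) S"
    by (rule has_sum_cong[THEN iffD1, rotated]) (auto simp: g_def)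
qed

lemma pos_recurrent_state_invariant_measure:
  assumes "i \<in> S" and rates: "\<And>j. j \<in> S \<Longrightarrow> 0 < - Q j j"
    and offdiag: "\<And>j k. j \<in> S \<Longrightarrow> k \<in> S \<Longrightarrow> j \<noteq> k \<Longrightarrow> 0 \<le> Q j k"
    and "pos_recurrent_state S Q i"
  obtains \<mu> where "invariant_measure S Q \<mu>" and "\<mu> summable_on S" and "0 < \<mu> i"
proof -
  let ?\<gamma> = "excursion_visits S Q i"
  define v where "v j = (if j \<in> S then ?\<gamma> j * ennreal (1 / - Q j j) else 0)" for j
  define \<mu> where "\<mu> j = enn2real (v j)" for j
  have return: "(\<Sum>n. taboo S Q i (Suc n) i) = 1" and finite: "(\<Sum>j. v j) < \<infinity>"
    using assms mean_return_time_excursion_visits[OF \<open>i \<in> S\<close>, of Q]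
    unfolding pos_recurrent_state_def v_def by auto
  have v_finite: "v j < \<infinity>" for j
    using ennreal_suminf_lessD[OF finite] .
  have v_eq: "ennreal (\<mu> j) = v j" for j
    using v_finite[of j] by (simp add: \<mu>_def)
  have \<mu>_nonneg: "0 \<le> \<mu> j" for j
    by (simp add: \<mu>_def)
  have \<gamma>_eq: "?\<gamma> j = ennreal (\<mu> j * - Q j j)" if "j \<in> S" for j
  proof -
    have "ennreal (1 / - Q j j) * ennreal (- Q j j) = 1"
      using rates[OF that] by (simp add: ennreal_mult[symmetric])
    then have "?\<gamma> j = v j * ennreal (- Q j j)"
      using that by (simp add: v_def mult.assoc)
    also have "\<dots> = ennreal (\<mu> j * - Q j j)"
      unfolding v_eq[symmetric]
      by (rule ennreal_mult[symmetric, OF \<mu>_nonneg less_imp_le[OF rates[OF that]]])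
    finally show ?thesis .
  qed
  have "invariant_measure S Q \<mu>"
  proof (rule invariant_measure_of_jump_invariant[OF rates offdiag])
    show "0 \<le> \<mu> j" for j by (rule \<mu>_nonneg)
    show "ennreal (\<mu> k * - Q k k) =
            (\<Sum>m. if m \<in> S then ennreal (\<mu> m * - Q m m) * ennreal (jump_matrix Q m k) else 0)"
      if "k \<in> S" for k
      using excursion_visits_invariant[OF return, of k] that
      by (simp add: \<gamma>_eq cong: if_cong)
  qed
  moreover have "\<mu> summable_on S"
  proof -
    have "(\<mu> has_sum enn2real (\<Sum>j. v j)) UNIV"
      using finite by (intro has_sum_of_suminf_ennreal) (simp_all add: \<mu>_nonneg v_eq)
    then show ?thesis
      by (meson has_sum_imp_summable subset_UNIV summable_on_subset)
  qed
  moreover have "0 < \<mu> i"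
    using rates[OF \<open>i \<in> S\<close>] \<open>i \<in> S\<close> by (simp add: \<mu>_def v_def excursion_visits_def)
  ultimately show ?thesis ..
qed

lemma qsd_of_dual_invariant_measure:
  fixes Q Qd :: "nat \<Rightarrow> nat \<Rightarrow> real"
  assumes dual: "\<And>j k. 1 \<le> j \<Longrightarrow> 1 \<le> k \<Longrightarrow>
      real k * Q j k = real j * Qd j k + lam * (if j = k then real k else 0)"
    and inv: "invariant_measure {1..} Qd \<mu>" and summable: "\<mu> summable_on {1..}"
    and "1 \<le> i" and "0 < \<mu> i"
  shows "\<exists>a. qsd Q lam a"
proof -
  define c where "c j = \<mu> j / real j" for j
  have \<mu>_nonneg: "0 \<le> \<mu> j" if "1 \<le> j" for j
    using inv that by (simp add: invariant_measure_def)
  have c_nonneg: "0 \<le> c j" if "1 \<le> j" for j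
    using \<mu>_nonneg[OF that] by (simp add: c_def)
  have "c summable_on {1..}"
  proof (rule summable_on_comparison_test[OF summable])
    show "c j \<le> \<mu> j" if "j \<in> {1..}" for j
      using that \<mu>_nonneg[of j] by (simp add: c_def divide_le_eq mult_le_cancel_left1)
  qed (simp add: c_nonneg)
  then obtain Z where c_sum: "(c has_sum Z) {1..}"
    by (auto simp: summable_on_def)
  have "c i \<le> Z"
    by (rule has_sum_mono_neutral[OF has_sum_finite_neutralI[of "{i}"] c_sum])
       (use \<open>1 \<le> i\<close> c_nonneg in auto)
  moreover have "0 < c i"
    using \<open>1 \<le> i\<close> \<open>0 < \<mu> i\<close> by (simp add: c_def)
  ultimately have "0 < Z" by linarith
  define a where "a j = c j / Z" for j
  have "qsd Q lam a"
    unfolding qsd_def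
  proof (intro conjI allI impI)
    show "0 \<le> a k" if "1 \<le> k" for k
      using c_nonneg[OF that] \<open>0 < Z\<close> by (simp add: a_def)
    show "(a has_sum 1) {1..}"
      using has_sum_cmult_right[OF c_sum, of "1 / Z"] \<open>0 < Z\<close>
      by (simp add: a_def[abs_def])
  next
    fix k :: nat assume "1 \<le> k"
    have "a j * Q j k = 1 / (real k * Z) * (\<mu> j * Qd j k) + (if j = k then lam * a k else 0)"
      if "j \<in> {1..}" for j
    proof -
      have "Q j k = (real j * Qd j k + lam * (if j = k then real k else 0)) / real k"
        using dual[of j k] that \<open>1 \<le> k\<close> by (simp add: field_simps)
      then show ?thesis
        using that \<open>1 \<le> k\<close> \<open>0 < Z\<close> by (simp add: a_def c_def field_simps)
    qed
    moreover have "((\<lambda>j. 1 / (real k * Z) * (\<mu> j * Qd j k) + (if j = k then lam * a k else 0))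
                     has_sum (lam * a k)) {1..}"
    proof -
      have inv_k: "((\<lambda>j. \<mu> j * Qd j k) has_sum 0) {1..}"
        using inv \<open>1 \<le> k\<close> by (simp add: invariant_measure_def)
      have diag: "((\<lambda>j. if j = k then lam * a k else 0) has_sum (lam * a k)) {1..}"
        by (rule has_sum_finite_neutralI[of "{k}"]) (use \<open>1 \<le> k\<close> in auto)
      show ?thesis
        using has_sum_add[OF has_sum_cmult_right[OF inv_k, of "1 / (real k * Z)"] diag] by simp
    qed
    ultimately show "((\<lambda>j. a j * Q j k) has_sum (lam * a k)) {1..}"
      by (rule has_sum_cong[THEN iffD2])
  qed
  then show ?thesis by blast
qed

lemma Qbar_offdiag_nonneg:
  assumes "0 \<le> p" "p \<le> 1" "j \<noteq> k"
  shows "0 \<le> Qbar p j k"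
  using assms unfolding Qbar_def by auto

lemma Qbar_diag_neg:
  assumes "0 < p" "p \<le> 1" "1 \<le> j"
  shows "0 < - Qbar p j j"
proof -
  have "p ^ j \<le> p"
    using power_decreasing[of 1 j p] assms by simp
  moreover have "p \<le> p * real j"
    using assms by simp
  moreover have "Qbar p j j = p ^ j - 2 * p - p * real j"
    by (simp add: Qbar_def algebra_simps)
  ultimately show ?thesis
    using assms by linarith
qed

lemma Qgen_dual_Qbar:
  assumes "1 \<le> j" "1 \<le> k"
  shows "real k * Qgen p j k = real j * Qbar p j k - (1 - 2 * p) * (if j = k then real k else 0)"
proof (cases "k < j")
  case True
  have "real k * real (j choose k) = real j * real ((j - 1) choose (k - 1))"
    using Suc_times_binomial[of "k - 1" "j - 1"] assms by (simp flip: of_nat_mult)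
  then show ?thesis
    using True assms unfolding Qgen_def Qbar_def by (simp add: mult.assoc[symmetric])
qed (auto simp: Qgen_def Qbar_def algebra_simps)

theorem proposition4:
  fixes p :: real
  assumes "0 < p" and "p \<le> 1"
    and "pos_recurrent_chain {1..} (Qbar p)"
  shows "\<exists>a. qsd (Qgen p) (- (1 - 2 * p)) a"
proof -
  have "pos_recurrent_state {1..} (Qbar p) 1"
    using assms(3) by (simp add: pos_recurrent_chain_def)
  then obtain \<mu> where "invariant_measure {1..} (Qbar p) \<mu>" "\<mu> summable_on {1..}" "0 < \<mu> 1"
    using pos_recurrent_state_invariant_measure[of 1 "{1..}" "Qbar p"]
      Qbar_diag_neg[OF assms(1,2)] Qbar_offdiag_nonneg[of p] assms(1,2) by auto
  moreover have "real k * Qgen p j k =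
      real j * Qbar p j k + - (1 - 2 * p) * (if j = k then real k else 0)"
    if "1 \<le> j" "1 \<le> k" for j k
    using Qgen_dual_Qbar[OF that, of p] by (simp add: algebra_simps)
  ultimately show ?thesis
    using qsd_of_dual_invariant_measure[of "Qgen p" "Qbar p"] by blast
qed

end
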